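(* Let $(T(\mathcal{A})=\mathcal{A}\oplus\mathcal{A}^*,\ast,\omega)$ be a double construction of symplectic antiassociative algebra associated to $\mathcal{A}$ and $\mathcal{A}^*$. Then the formulas $\omega(u\succ v,w)=\omega(v,w\ast u)$, $\omega(u\prec v,w)=\omega(u,v\ast w)$ ($u,v,w\in T(\mathcal{A})$) define a compatible antidendriform algebra structure on $(T(\mathcal{A}),\ast)$, and $\mathcal{A}$ and $\mathcal{A}^*$ are antidendriform subalgebras of $(T(\mathcal{A}),\succ,\prec)$.
   Context: An antiassociative algebra is a vector space with bilinear product satisfying $(x\ast y)\ast z=-x\ast(y\ast z)$. Let $\mathcal{A}$ be a finite-dimensional vector space. A double construction of symplectic antiassociative algebra associated to antiassociative algebras $\mathcal{A}$ and $\mathcal{A}^*$ (on the dual space) is an antiassociative product $\ast$ on $\mathcal{A}\oplus\mathcal{A}^*$ such that $\mathcal{A}$ and $\mathcal{A}^*$ are subalgebras (with their given products) and the non-degenerate skew-symmetric form $\omega(x+a^*,y+b^* )=-\langle x,b^*\rangle+\langle a^*,y\rangle$ satisfies $\omega(u\ast v,w)+\omega(v\ast w,u)+\omega(w\ast u,v)=0$ for all $u,v,w$. An antidendriform algebra is a vector space with bilinear products $\prec,\succ$ such that, with $x\star y=x\prec y+x\succ y$: $(x\prec y)\prec z=-x\prec(y\star z)$, $(x\succ y)\prec z=-x\succ(y\prec z)$, $x\succ(y\succ z)=-(x\star y)\succ z$; it is compatible with $\ast$ if $x\succ y+x\prec y=x\ast y$. *)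

theory Defs
  imports "HOL-Analysis.Analysis"
begin

text \<open>The finite-dimensional space A is represented (after choosing a basis) as
 'k^'n for a finite index type 'n; its dual A* is represented by 'k^'n as well, the
 duality pairing being the standard one.\<close>

type_synonym ('k,'n) dbl = "('k^'n) \<times> ('k^'n)"

definition bilin :: "('k \<Rightarrow> 'v \<Rightarrow> 'v) \<Rightarrow> ('v::ab_group_add \<Rightarrow> 'v \<Rightarrow> 'v) \<Rightarrow> bool" where
  "bilin scl m \<longleftrightarrow>
     (\<forall>x y z. m (x + y) z = m x z + m y z) \<and>
     (\<forall>x y z. m x (y + z) = m x y + m x z) \<and>
     (\<forall>c x y. m (scl c x) y = scl c (m x y)) \<and>
     (\<forall>c x y. m x (scl c y) = scl c (m x y))"

definition antiassoc_alg :: "('k \<Rightarrow> 'v \<Rightarrow> 'v) \<Rightarrow> ('v::ab_group_add \<Rightarrow> 'v \<Rightarrow> 'v) \<Rightarrow> bool" where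
  "antiassoc_alg scl m \<longleftrightarrow> bilin scl m \<and> (\<forall>x y z. m (m x y) z = - m x (m y z))"

definition antidendriform :: "('k \<Rightarrow> 'v \<Rightarrow> 'v) \<Rightarrow> ('v::ab_group_add \<Rightarrow> 'v \<Rightarrow> 'v) \<Rightarrow> ('v \<Rightarrow> 'v \<Rightarrow> 'v) \<Rightarrow> bool" where
  "antidendriform scl prec succ \<longleftrightarrow> bilin scl prec \<and> bilin scl succ \<and>
     (\<forall>x y z. prec (prec x y) z = - prec x (prec y z + succ y z)) \<and>
     (\<forall>x y z. prec (succ x y) z = - succ x (prec y z)) \<and>
     (\<forall>x y z. succ x (succ y z) = - succ (prec x y + succ x y) z)"

definition vsc :: "'k::field \<Rightarrow> 'k^'n::finite \<Rightarrow> 'k^'n" where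
  "vsc c x = c *s x"

definition dsc :: "'k::field \<Rightarrow> ('k,'n::finite) dbl \<Rightarrow> ('k,'n) dbl" where
  "dsc c u = (c *s fst u, c *s snd u)"

definition pairing :: "'k::field^'n::finite \<Rightarrow> 'k^'n \<Rightarrow> 'k" where
  "pairing x a = (\<Sum>i\<in>UNIV. x $ i * a $ i)"

definition omega :: "('k::field,'n::finite) dbl \<Rightarrow> ('k,'n) dbl \<Rightarrow> 'k" where
  "omega u v = - pairing (fst u) (snd v) + pairing (snd u) (fst v)"

definition double_construction ::
  "('k::field^'n::finite \<Rightarrow> 'k^'n \<Rightarrow> 'k^'n) \<Rightarrow> ('k^'n \<Rightarrow> 'k^'n \<Rightarrow> 'k^'n)
   \<Rightarrow> (('k,'n) dbl \<Rightarrow> ('k,'n) dbl \<Rightarrow> ('k,'n) dbl) \<Rightarrow> bool" where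
  "double_construction mA mD m \<longleftrightarrow>
     antiassoc_alg vsc mA \<and> antiassoc_alg vsc mD \<and> antiassoc_alg dsc m \<and>
     (\<forall>x y. m (x, 0) (y, 0) = (mA x y, 0)) \<and>
     (\<forall>a b. m (0, a) (0, b) = (0, mD a b)) \<and>
     (\<forall>u v w. omega (m u v) w + omega (m v w) u + omega (m w u) v = 0)"

end

theory Submission
  imports Defs
begin

text \<open>Since \<omega> is non-degenerate, the two defining identities determine \<open>\<succ>\<close> and \<open>\<prec>\<close>
  as the \<omega>-adjoints of right and left multiplication, and they exist because every linear
  functional on the finite-dimensional space \<open>T(A)\<close> is of the form \<open>\<omega>(r, -)\<close>.  Every axiom
  of an antidendriform algebra then becomes, after pairing with an arbitrary \<open>w\<close> and moving
  all products to the right of \<omega>, an instance of antiassociativity of \<open>\<ast>\<close>; the only place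
  where the cyclic condition on \<omega> enters is \<open>u \<succ> v + u \<prec> v = u \<ast> v\<close>.  Finally \<open>A\<close> and
  \<open>A\<^sup>*\<close> are Lagrangian for \<omega> and closed under \<open>\<ast>\<close>, which forces \<open>\<succ>\<close> and \<open>\<prec>\<close> to preserve them.\<close>

lemma pairing_add_left: "pairing (x + y) a = pairing x a + pairing y a"
  unfolding pairing_def by (simp add: sum.distrib distrib_right)

lemma pairing_add_right: "pairing a (x + y) = pairing a x + pairing a y"
  unfolding pairing_def by (simp add: sum.distrib distrib_left)

lemma pairing_scale_left: "pairing (c *s x) a = c * pairing x a"
  unfolding pairing_def by (simp add: sum_distrib_left mult.assoc)

lemma pairing_scale_right: "pairing a (c *s x) = c * pairing a x"
  unfolding pairing_def by (simp add: sum_distrib_left mult.left_commute)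

lemma pairing_minus_left: "pairing (- x) a = - pairing x a"
  unfolding pairing_def by (simp add: sum_negf)

lemma pairing_minus_right: "pairing a (- x) = - pairing a x"
  unfolding pairing_def by (simp add: sum_negf)

lemma pairing_zero [simp]: "pairing x 0 = 0" "pairing 0 x = 0"
  unfolding pairing_def by simp_all

lemma pairing_axis [simp]: "pairing x (axis i 1) = x $ i"
  unfolding pairing_def axis_def by (simp add: if_distrib cong: if_cong)

lemma omega_add_left: "omega (u + v) w = omega u w + omega v w"
  unfolding omega_def by (simp add: pairing_add_left)

lemma omega_add_right: "omega w (u + v) = omega w u + omega w v"
  unfolding omega_def by (simp add: pairing_add_right)

lemma omega_dsc_left: "omega (dsc c u) w = c * omega u w"
  unfolding omega_def dsc_def by (simp add: pairing_scale_left algebra_simps)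

lemma omega_dsc_right: "omega w (dsc c u) = c * omega w u"
  unfolding omega_def dsc_def by (simp add: pairing_scale_right algebra_simps)

lemma omega_minus_left: "omega (- u) w = - omega u w"
  unfolding omega_def by (simp add: pairing_minus_left)

lemma omega_minus_right: "omega w (- u) = - omega w u"
  unfolding omega_def by (simp add: pairing_minus_right)

lemma omega_skew: "omega u v = - omega v u"
  unfolding omega_def pairing_def by (simp add: mult.commute)

lemma omega_axis_fst: "omega z (axis i 1, 0) = snd z $ i"
  unfolding omega_def by simp

lemma omega_axis_snd: "omega z (0, axis i 1) = - fst z $ i"
  unfolding omega_def by simp

lemma omega_nondegenerate:
  fixes u v :: "('k::field,'n::finite) dbl"
  assumes "\<And>w. omega u w = omega v w"
  shows "u = v"
proof -
  have "snd u $ i = snd v $ i" for i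
    using assms[of "(axis i 1, 0)"] by (simp add: omega_axis_fst)
  moreover have "fst u $ i = fst v $ i" for i
    using assms[of "(0, axis i 1)"] by (simp add: omega_axis_snd)
  ultimately show ?thesis by (simp add: prod_eq_iff vec_eq_iff)
qed

lemma omega_in_fst: "omega z (x, 0) = pairing (snd z) x"
  unfolding omega_def by simp

lemma omega_in_snd: "omega z (0, a) = - pairing (fst z) a"
  unfolding omega_def by simp

lemma omega_fst_fst: "omega (x, 0) (y, 0) = 0"
  unfolding omega_def by simp

lemma omega_snd_snd: "omega (0, a) (0, b) = 0"
  unfolding omega_def by simp

lemma snd_eq_0_iff_orthogonal_to_fst:
  fixes z :: "('k::field,'n::finite) dbl"
  shows "snd z = 0 \<longleftrightarrow> (\<forall>x. omega z (x, 0) = 0)"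
  by (metis omega_in_fst pairing_axis pairing_zero(2) vec_eq_iff zero_index)

lemma fst_eq_0_iff_orthogonal_to_snd:
  fixes z :: "('k::field,'n::finite) dbl"
  shows "fst z = 0 \<longleftrightarrow> (\<forall>a. omega z (0, a) = 0)"
  by (metis omega_in_snd neg_equal_0_iff_equal pairing_axis pairing_zero(2) vec_eq_iff zero_index)

definition omega_dual :: "(('k::field,'n::finite) dbl \<Rightarrow> 'k) \<Rightarrow> ('k,'n) dbl" where
  "omega_dual f = ((\<chi> i. - f (0, axis i 1)), (\<chi> i. f (axis i 1, 0)))"

lemma dbl_basis_expansion:
  fixes w :: "('k::field,'n::finite) dbl"
  shows "w = (\<Sum>i\<in>UNIV. dsc (fst w $ i) (axis i 1, 0)) + (\<Sum>i\<in>UNIV. dsc (snd w $ i) (0, axis i 1))"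
  by (simp add: prod_eq_iff fst_sum snd_sum dsc_def basis_expansion)

lemma omega_omega_dual:
  fixes f :: "('k::field,'n::finite) dbl \<Rightarrow> 'k"
  assumes add: "\<And>u v. f (u + v) = f u + f v" and scale: "\<And>c u. f (dsc c u) = c * f u"
  shows "omega (omega_dual f) w = f w"
proof -
  have "f 0 = 0"
    using add[of 0 0] by (metis add_cancel_left_right)
  with add have f_sum: "f (sum g A) = (\<Sum>x\<in>A. f (g x))" for g and A :: "'n set"
    by (induction A rule: infinite_finite_induct) simp_all
  have "f w = f (\<Sum>i\<in>UNIV. dsc (fst w $ i) (axis i 1, 0)) + f (\<Sum>i\<in>UNIV. dsc (snd w $ i) (0, axis i 1))"
    by (subst dbl_basis_expansion) (rule add)
  also have "\<dots> = (\<Sum>i\<in>UNIV. fst w $ i * f (axis i 1, 0)) + (\<Sum>i\<in>UNIV. snd w $ i * f (0, axis i 1))"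
    by (simp only: f_sum scale)
  also have "\<dots> = omega (omega_dual f) w"
    unfolding omega_def omega_dual_def pairing_def by (simp add: sum_negf mult.commute)
  finally show ?thesis by simp
qed

lemma bilinD:
  assumes "bilin scl m"
  shows "m (x + y) z = m x z + m y z" and "m x (y + z) = m x y + m x z"
    and "m (scl c x) y = scl c (m x y)" and "m x (scl c y) = scl c (m x y)"
  using assms unfolding bilin_def by auto

lemma omega_adjoints_exist:
  fixes m :: "('k::field,'n::finite) dbl \<Rightarrow> ('k,'n) dbl \<Rightarrow> ('k,'n) dbl"
  assumes "bilin dsc m"
  shows "\<exists>succ prec :: ('k,'n) dbl \<Rightarrow> ('k,'n) dbl \<Rightarrow> ('k,'n) dbl.
           (\<forall>u v w. omega (succ u v) w = omega v (m w u)) \<and>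
           (\<forall>u v w. omega (prec u v) w = omega u (m v w))"
proof (intro exI conjI allI)
  fix u v w
  show "omega (omega_dual (\<lambda>w. omega v (m w u))) w = omega v (m w u)"
    by (intro omega_omega_dual) (simp_all add: bilinD[OF assms] omega_add_right omega_dsc_right)
  show "omega (omega_dual (\<lambda>w. omega u (m v w))) w = omega u (m v w)"
    by (intro omega_omega_dual) (simp_all add: bilinD[OF assms] omega_add_right omega_dsc_right)
qed

lemma bilin_omega_right_adjoint:
  assumes "bilin dsc m" and succ: "\<And>u v w. omega (succ u v) w = omega v (m w u)"
  shows "bilin dsc succ"
  unfolding bilin_def
  by (intro conjI allI; rule omega_nondegenerate)
     (simp_all add: succ bilinD[OF assms(1)] omega_add_left omega_add_right omega_dsc_left omega_dsc_right)

lemma bilin_omega_left_adjoint: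
  assumes "bilin dsc m" and prec: "\<And>u v w. omega (prec u v) w = omega u (m v w)"
  shows "bilin dsc prec"
  unfolding bilin_def
  by (intro conjI allI; rule omega_nondegenerate)
     (simp_all add: prec bilinD[OF assms(1)] omega_add_left omega_add_right omega_dsc_left omega_dsc_right)

lemma omega_adjoints_add:
  assumes cyclic: "\<And>u v w. omega (m u v) w + omega (m v w) u + omega (m w u) v = 0"
    and succ: "\<And>u v w. omega (succ u v) w = omega v (m w u)"
    and prec: "\<And>u v w. omega (prec u v) w = omega u (m v w)"
  shows "succ u v + prec u v = m u v"
proof (rule omega_nondegenerate)
  fix w
  have "omega (succ u v + prec u v) w = - (omega (m v w) u + omega (m w u) v)"
    by (simp add: omega_add_left succ prec omega_skew[of v] omega_skew[of u])
  also have "\<dots> = omega (m u v) w"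
    unfolding neg_eq_iff_add_eq_0 using cyclic[of u v w] by (simp add: add_ac)
  finally show "omega (succ u v + prec u v) w = omega (m u v) w" .
qed

lemma antidendriform_omega_adjoints:
  assumes "antiassoc_alg dsc m"
    and split: "\<And>u v. prec u v + succ u v = m u v"
    and succ: "\<And>u v w. omega (succ u v) w = omega v (m w u)"
    and prec: "\<And>u v w. omega (prec u v) w = omega u (m v w)"
  shows "antidendriform dsc prec succ"
proof -
  from assms(1) have bilin: "bilin dsc m" and assoc: "\<And>x y z. m (m x y) z = - m x (m y z)"
    unfolding antiassoc_alg_def by auto
  show ?thesis
    unfolding antidendriform_def split
    by (intro conjI allI bilin_omega_right_adjoint[OF bilin succ]
          bilin_omega_left_adjoint[OF bilin prec]; rule omega_nondegenerate)
       (simp_all add: succ prec assoc omega_minus_left omega_minus_right)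
qed

theorem mainTheorem12:
  fixes mA mD :: "'k::field^'n::finite \<Rightarrow> 'k^'n \<Rightarrow> 'k^'n"
    and m :: "('k,'n) dbl \<Rightarrow> ('k,'n) dbl \<Rightarrow> ('k,'n) dbl"
  assumes "double_construction mA mD m"
  shows "(\<exists>succ prec :: ('k,'n) dbl \<Rightarrow> ('k,'n) dbl \<Rightarrow> ('k,'n) dbl.
            (\<forall>u v w. omega (succ u v) w = omega v (m w u)) \<and>
            (\<forall>u v w. omega (prec u v) w = omega u (m v w)))
      \<and> (\<forall>succ prec :: ('k,'n) dbl \<Rightarrow> ('k,'n) dbl \<Rightarrow> ('k,'n) dbl.
            (\<forall>u v w. omega (succ u v) w = omega v (m w u)) \<and>
            (\<forall>u v w. omega (prec u v) w = omega u (m v w)) \<longrightarrow>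
              antidendriform dsc prec succ \<and>
              (\<forall>u v. succ u v + prec u v = m u v) \<and>
              (\<forall>x y. snd (succ (x, 0) (y, 0)) = 0 \<and> snd (prec (x, 0) (y, 0)) = 0) \<and>
              (\<forall>a b. fst (succ (0, a) (0, b)) = 0 \<and> fst (prec (0, a) (0, b)) = 0))"
proof (intro conjI allI impI)
  from assms have antiassoc: "antiassoc_alg dsc m"
    and mA: "\<And>x y. m (x, 0) (y, 0) = (mA x y, 0)"
    and mD: "\<And>a b. m (0, a) (0, b) = (0, mD a b)"
    and cyclic: "\<And>u v w. omega (m u v) w + omega (m v w) u + omega (m w u) v = 0"
    unfolding double_construction_def by auto
  then show "\<exists>succ prec. (\<forall>u v w. omega (succ u v) w = omega v (m w u)) \<and>
                          (\<forall>u v w. omega (prec u v) w = omega u (m v w))"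
    by (intro omega_adjoints_exist) (simp add: antiassoc_alg_def)
  fix succ prec :: "('k,'n) dbl \<Rightarrow> ('k,'n) dbl \<Rightarrow> ('k,'n) dbl"
  assume "(\<forall>u v w. omega (succ u v) w = omega v (m w u)) \<and>
          (\<forall>u v w. omega (prec u v) w = omega u (m v w))"
  then have succ: "\<And>u v w. omega (succ u v) w = omega v (m w u)"
    and prec: "\<And>u v w. omega (prec u v) w = omega u (m v w)" by auto
  show split: "succ u v + prec u v = m u v" for u v
    by (rule omega_adjoints_add[OF cyclic succ prec])
  show "antidendriform dsc prec succ"
    using antiassoc split by (intro antidendriform_omega_adjoints) (simp_all add: add.commute succ prec)
  show "snd (succ (x, 0) (y, 0)) = 0" "snd (prec (x, 0) (y, 0)) = 0" for x y
    by (simp_all add: snd_eq_0_iff_orthogonal_to_fst succ prec mA omega_fst_fst)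
  show "fst (succ (0, a) (0, b)) = 0" "fst (prec (0, a) (0, b)) = 0" for a b
    by (simp_all add: fst_eq_0_iff_orthogonal_to_snd succ prec mD omega_snd_snd)
qed

end
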